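(* The 2-sided ideal $\Delta[\Delta,\Delta]\Delta$ of $\Delta$ generated by $[\Delta,\Delta]={\rm Span}\{uv-vu : u,v\in\Delta\}$ coincides with the kernel of the unique $\mathbb F$-algebra homomorphism $\Delta\to\mathbb F[\overline A,\overline B,\overline C]$ sending $A\mapsto\overline A$, $B\mapsto\overline B$, $C\mapsto\overline C$, where $\overline A,\overline B,\overline C$ are mutually commuting indeterminates.
   Context: Let $\mathbb F$ be a field and fix a nonzero $q\in\mathbb F$ with $q^4\neq 1$. The universal Askey--Wilson algebra $\Delta$ is the associative $\mathbb F$-algebra with 1 with generators $A,B,C$ subject to the relations that each of $A+\frac{qBC-q^{-1}CB}{q^2-q^{-2}}$, $B+\frac{qCA-q^{-1}AC}{q^2-q^{-2}}$, $C+\frac{qAB-q^{-1}BA}{q^2-q^{-2}}$ is central. (The homomorphism to the polynomial algebra exists and is surjective.) *)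

theory Defs
  imports "HOL-Library.Poly_Mapping"
begin

datatype gen = GA | GB | GC

datatype word = Word "gen list"

instantiation word :: monoid_add
begin
definition zero_word :: word where "zero_word = Word []"
fun plus_word :: "word \<Rightarrow> word \<Rightarrow> word" where
  "plus_word (Word xs) (Word ys) = Word (xs @ ys)"
instance
proof
  fix a b c :: word
  show "a + b + c = a + (b + c)" by (cases a; cases b; cases c) simp
  show "0 + a = a" by (cases a) (simp add: zero_word_def)
  show "a + 0 = a" by (cases a) (simp add: zero_word_def)
qed
end

(* the free (noncommutative) associative algebra F<A,B,C> with 1 *)
type_synonym 'k freealg = "word \<Rightarrow>\<^sub>0 'k"

(* the commutative polynomial algebra F[Abar,Bbar,Cbar] *)
type_synonym 'k cpoly = "(gen \<Rightarrow>\<^sub>0 nat) \<Rightarrow>\<^sub>0 'k"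

definition sc :: "'k::field \<Rightarrow> 'k freealg" where
  "sc c = Poly_Mapping.single 0 c"

definition gn :: "gen \<Rightarrow> 'k::field freealg" where
  "gn g = Poly_Mapping.single (Word [g]) 1"

inductive_set ideal_gen :: "'a::ring set \<Rightarrow> 'a set" for S where
  base: "x \<in> S \<Longrightarrow> x \<in> ideal_gen S"
| zero: "0 \<in> ideal_gen S"
| add: "x \<in> ideal_gen S \<Longrightarrow> y \<in> ideal_gen S \<Longrightarrow> x + y \<in> ideal_gen S"
| lmult: "x \<in> ideal_gen S \<Longrightarrow> r * x \<in> ideal_gen S"
| rmult: "x \<in> ideal_gen S \<Longrightarrow> x * r \<in> ideal_gen S"

definition aw_alpha :: "'k::field \<Rightarrow> gen \<Rightarrow> gen \<Rightarrow> gen \<Rightarrow> 'k freealg" where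
  "aw_alpha q X Y Z = gn X + sc (q / (q^2 - inverse q ^ 2)) * gn Y * gn Z
                          - sc (inverse q / (q^2 - inverse q ^ 2)) * gn Z * gn Y"

(* defining ideal of Delta inside F<A,B,C>: the three elements above are central *)
definition aw_ideal :: "'k::field \<Rightarrow> 'k freealg set" where
  "aw_ideal q = ideal_gen
     {a * x - x * a | a x. a \<in> {aw_alpha q GA GB GC, aw_alpha q GB GC GA, aw_alpha q GC GA GB}}"

(* Delta = F<A,B,C> / aw_ideal q; an element of Delta is represented by x.
   Preimage in F<A,B,C> of the two-sided ideal Delta[Delta,Delta]Delta of Delta
   (commutators of Delta are images of commutators of representatives). *)
definition aw_comm_ideal_preimage :: "'k::field \<Rightarrow> 'k freealg set" where
  "aw_comm_ideal_preimage q =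
     {x. \<exists>y \<in> ideal_gen {u * v - v * u | u v :: 'k freealg. True}. x - y \<in> aw_ideal q}"

fun word_exps :: "word \<Rightarrow> (gen \<Rightarrow>\<^sub>0 nat)" where
  "word_exps (Word xs) = (\<Sum>g\<leftarrow>xs. Poly_Mapping.single g 1)"

(* the F-algebra homomorphism F<A,B,C> -> F[Abar,Bbar,Cbar], A|->Abar etc.;
   it factors through Delta, giving the homomorphism Delta -> F[Abar,Bbar,Cbar] *)
definition abel_hom :: "'k::field freealg \<Rightarrow> 'k cpoly" where
  "abel_hom x = (\<Sum>w\<in>Poly_Mapping.keys x. Poly_Mapping.single (word_exps w) (Poly_Mapping.lookup x w))"

end

theory Submission
  imports Defs "HOL-Library.Multiset"
begin

text \<open>Every defining relation of \<open>\<Delta>\<close> is a commutator, so the defining ideal lies in the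
  commutator ideal of the free algebra and the preimage is just that commutator ideal. A map
  that is additive and multiplicative into a commutative ring kills all commutators, hence
  abelianization kills the commutator ideal. Conversely, modulo commutators a generator can be
  moved to the front of any word, so every word is congruent to the sorted word
  \<open>A\<^sup>i B\<^sup>j C\<^sup>k\<close> with the same exponents; an element in the kernel of abelianization
  becomes \<open>0\<close> after sorting all its words.\<close>

abbreviation commutator_ideal :: "'a::ring set" where
  "commutator_ideal \<equiv> ideal_gen {u * v - v * u | u v. True}"

lemma ideal_gen_uminus: "(x::'a::ring_1) \<in> ideal_gen S \<Longrightarrow> - x \<in> ideal_gen S"
  using ideal_gen.lmult[of x S "-1"] by simp

lemma ideal_gen_diff:
  "(x::'a::ring_1) \<in> ideal_gen S \<Longrightarrow> y \<in> ideal_gen S \<Longrightarrow> x - y \<in> ideal_gen S"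
  using ideal_gen.add[OF _ ideal_gen_uminus] by (metis diff_conv_add_uminus)

lemma ideal_gen_sum: "(\<And>i. i \<in> A \<Longrightarrow> f i \<in> ideal_gen S) \<Longrightarrow> sum f A \<in> ideal_gen S"
  by (induction A rule: infinite_finite_induct) (auto intro: ideal_gen.intros)

lemma ideal_gen_mono: "S \<subseteq> T \<Longrightarrow> ideal_gen S \<subseteq> ideal_gen T"
proof
  fix x assume "x \<in> ideal_gen S" "S \<subseteq> T"
  then show "x \<in> ideal_gen T" by (induction rule: ideal_gen.induct) (auto intro: ideal_gen.intros)
qed

lemma aw_comm_ideal_preimage_eq: "aw_comm_ideal_preimage q = commutator_ideal"
proof -
  have aw: "aw_ideal q \<subseteq> commutator_ideal"
    unfolding aw_ideal_def by (rule ideal_gen_mono) blast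
  show ?thesis
  proof safe
    fix x assume "x \<in> aw_comm_ideal_preimage q"
    then obtain y where "y \<in> commutator_ideal" "x - y \<in> aw_ideal q"
      unfolding aw_comm_ideal_preimage_def by auto
    with aw have "(x - y) + y \<in> commutator_ideal" by (blast intro: ideal_gen.add)
    then show "x \<in> commutator_ideal" by simp
  next
    fix x :: "'a freealg" assume "x \<in> commutator_ideal"
    then show "x \<in> aw_comm_ideal_preimage q"
      unfolding aw_comm_ideal_preimage_def aw_ideal_def by (auto intro!: bexI[of _ x] ideal_gen.zero)
  qed
qed

lemma commutator_ideal_in_kernel:
  fixes f :: "'a::ring \<Rightarrow> 'b::comm_ring"
  assumes add: "\<And>x y. f (x + y) = f x + f y" and mult: "\<And>x y. f (x * y) = f x * f y"
    and "x \<in> commutator_ideal"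
  shows "f x = 0"
  using \<open>x \<in> commutator_ideal\<close>
proof (induction rule: ideal_gen.induct)
  case (base x)
  then obtain u v where "x = u * v - v * u" by blast
  then have "x + v * u = u * v" by simp
  then have "f x + f v * f u = f u * f v" by (metis add mult)
  then show ?case by (simp add: mult.commute)
next
  case zero
  show ?case using add[of 0 0] by simp
qed (simp_all add: add mult)

lemma abel_hom_eq_sum_superset:
  assumes "finite S" "Poly_Mapping.keys x \<subseteq> S"
  shows "abel_hom x = (\<Sum>w\<in>S. Poly_Mapping.single (word_exps w) (Poly_Mapping.lookup x w))"
  unfolding abel_hom_def
  by (rule sum.mono_neutral_left) (use assms in \<open>auto simp: in_keys_iff\<close>)

lemma abel_hom_add: "abel_hom (x + y) = abel_hom x + abel_hom y"
proof -
  let ?S = "Poly_Mapping.keys x \<union> Poly_Mapping.keys y"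
  have "Poly_Mapping.keys (x + y) \<subseteq> ?S" by (rule keys_add)
  then show ?thesis
    by (simp add: abel_hom_eq_sum_superset[of ?S] abel_hom_eq_sum_superset[of ?S x]
        abel_hom_eq_sum_superset[of ?S y] lookup_add single_add sum.distrib)
qed

lemma abel_hom_zero: "abel_hom 0 = 0"
  by (simp add: abel_hom_def)

lemma abel_hom_sum: "abel_hom (sum f A) = (\<Sum>i\<in>A. abel_hom (f i))"
  by (induction A rule: infinite_finite_induct) (simp_all add: abel_hom_add abel_hom_zero)

lemma abel_hom_single [simp]:
  "abel_hom (Poly_Mapping.single w c) = Poly_Mapping.single (word_exps w) c"
  by (subst abel_hom_eq_sum_superset[of "{w}"]) auto

lemma poly_mapping_sum_single:
  "x = (\<Sum>w\<in>Poly_Mapping.keys x. Poly_Mapping.single w (Poly_Mapping.lookup x w))"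
  by (rule poly_mapping_eqI)
    (auto simp: lookup_sum lookup_single when_def in_keys_iff sum.delta' split: if_splits)

lemma word_exps_add: "word_exps (v + w) = word_exps v + word_exps w"
  by (cases v; cases w) auto

lemma abel_hom_mult: "abel_hom (x * y) = abel_hom x * abel_hom y"
proof -
  let ?m = "\<lambda>z w. Poly_Mapping.single w (Poly_Mapping.lookup z w)"
  have expand: "abel_hom x' * abel_hom y' =
      (\<Sum>v\<in>Poly_Mapping.keys x'. \<Sum>w\<in>Poly_Mapping.keys y'. abel_hom (?m x' v) * abel_hom (?m y' w))"
    for x' y' :: "'a freealg"
    by (subst poly_mapping_sum_single[of x'], subst poly_mapping_sum_single[of y'])
      (simp add: abel_hom_sum sum_distrib_left sum_distrib_right, rule sum.swap)
  have "abel_hom (x * y) =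
      abel_hom ((\<Sum>v\<in>Poly_Mapping.keys x. ?m x v) * (\<Sum>w\<in>Poly_Mapping.keys y. ?m y w))"
    using poly_mapping_sum_single[of x] poly_mapping_sum_single[of y] by simp
  also have "\<dots> = (\<Sum>v\<in>Poly_Mapping.keys x. \<Sum>w\<in>Poly_Mapping.keys y. abel_hom (?m x v * ?m y w))"
    by (simp add: sum_distrib_left sum_distrib_right abel_hom_sum) (rule sum.swap)
  also have "\<dots> = abel_hom x * abel_hom y"
    by (simp add: expand mult_single word_exps_add)
  finally show ?thesis .
qed

lemma commutator_ideal_subset_ker_abel_hom:
  "x \<in> commutator_ideal \<Longrightarrow> abel_hom (x :: 'k::field freealg) = 0"
  by (rule commutator_ideal_in_kernel[OF abel_hom_add abel_hom_mult])

lemma single_Word_mult: "Poly_Mapping.single (Word u) c * Poly_Mapping.single (Word v) d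
    = Poly_Mapping.single (Word (u @ v)) (c * d)"
  by (simp add: mult_single)

lemma single_Word_move_to_front:
  "Poly_Mapping.single (Word (u @ g # v)) (c::'k::field)
     - Poly_Mapping.single (Word (g # u @ v)) c \<in> commutator_ideal"
proof -
  let ?U = "Poly_Mapping.single (Word u) c"
  have "(?U * gn g - gn g * ?U) * Poly_Mapping.single (Word v) 1 \<in> commutator_ideal"
    by (blast intro: ideal_gen.base ideal_gen.rmult)
  then show ?thesis by (simp add: gn_def algebra_simps single_Word_mult)
qed

lemma single_Word_perm:
  "mset xs = mset ys \<Longrightarrow>
     Poly_Mapping.single (Word xs) (c::'k::field) - Poly_Mapping.single (Word ys) c \<in> commutator_ideal"
proof (induction xs arbitrary: ys)
  case Nil
  then show ?case by (simp add: ideal_gen.zero)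
next
  case (Cons g xs)
  let ?S = "\<lambda>l. Poly_Mapping.single (Word l) c"
  obtain u v where ys: "ys = u @ g # v"
    using Cons.prems by (metis list.set_intros(1) set_mset_mset split_list)
  with Cons.prems have "?S xs - ?S (u @ v) \<in> commutator_ideal" by (intro Cons.IH) simp
  then have "gn g * (?S xs - ?S (u @ v)) \<in> commutator_ideal" by (rule ideal_gen.lmult)
  then have "?S (g # xs) - ?S (g # u @ v) \<in> commutator_ideal"
    by (simp add: gn_def algebra_simps mult_single)
  from ideal_gen_diff[OF this single_Word_move_to_front[of u g v c]] show ?case
    using ys by simp
qed

definition sorted_letters :: "(gen \<Rightarrow>\<^sub>0 nat) \<Rightarrow> gen list" where
  "sorted_letters e = replicate (Poly_Mapping.lookup e GA) GA
     @ replicate (Poly_Mapping.lookup e GB) GB @ replicate (Poly_Mapping.lookup e GC) GC"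

lemma count_sorted_letters: "count (mset (sorted_letters e)) g = Poly_Mapping.lookup e g"
  by (cases g) (auto simp: sorted_letters_def)

lemma lookup_word_exps: "Poly_Mapping.lookup (word_exps (Word xs)) g = count (mset xs) g"
  by (induction xs) (simp_all add: lookup_add lookup_single when_def)

lemma word_exps_sorted_letters: "word_exps (Word (sorted_letters e)) = e"
  by (rule poly_mapping_eqI) (simp only: lookup_word_exps count_sorted_letters)

lemma single_minus_single_sorted:
  "Poly_Mapping.single w (c::'k::field)
     - Poly_Mapping.single (Word (sorted_letters (word_exps w))) c \<in> commutator_ideal"
proof (cases w)
  case (Word xs)
  have "mset xs = mset (sorted_letters (word_exps (Word xs)))"
    by (rule multiset_eqI) (simp only: count_sorted_letters lookup_word_exps)
  then show ?thesis using Word by (simp only: single_Word_perm)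
qed

lemma lookup_abel_hom:
  "Poly_Mapping.lookup (abel_hom x) e
     = (\<Sum>w\<in>Poly_Mapping.keys x. Poly_Mapping.lookup x w when word_exps w = e)"
  unfolding abel_hom_def by (simp add: lookup_sum lookup_single when_def eq_commute)

text \<open>The sorted form of \<open>x\<close> has coefficient \<open>lookup (abel_hom x) e\<close> at the sorted word of
  exponent \<open>e\<close>, since \<open>sorted_letters\<close> is injective.\<close>

lemma ker_abel_hom_subset_commutator_ideal:
  assumes "abel_hom (x::'k::field freealg) = 0"
  shows "x \<in> commutator_ideal"
proof -
  let ?K = "Poly_Mapping.keys x" and ?sort = "\<lambda>w. Word (sorted_letters (word_exps w))"
  define y where "y = (\<Sum>w\<in>?K. Poly_Mapping.single (?sort w) (Poly_Mapping.lookup x w))"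
  have "x - y = (\<Sum>w\<in>?K. Poly_Mapping.single w (Poly_Mapping.lookup x w)
                   - Poly_Mapping.single (?sort w) (Poly_Mapping.lookup x w))"
    unfolding y_def by (subst (1) poly_mapping_sum_single) (simp add: sum_subtractf)
  also have "\<dots> \<in> commutator_ideal"
    by (rule ideal_gen_sum) (rule single_minus_single_sorted)
  finally have "x - y \<in> commutator_ideal" .
  moreover have "y = 0"
  proof (rule poly_mapping_eqI)
    fix k
    have lookup_y: "Poly_Mapping.lookup y k = (\<Sum>w\<in>?K. Poly_Mapping.lookup x w when ?sort w = k)"
      unfolding y_def by (simp add: lookup_sum lookup_single)
    show "Poly_Mapping.lookup y k = Poly_Mapping.lookup 0 k"
    proof (cases "\<exists>e. k = Word (sorted_letters e)")
      case True
      then obtain e where k: "k = Word (sorted_letters e)" by blast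
      have "?sort w = k \<longleftrightarrow> word_exps w = e" for w
        using k word_exps_sorted_letters by metis
      then have "Poly_Mapping.lookup y k = Poly_Mapping.lookup (abel_hom x) e"
        by (simp add: lookup_y lookup_abel_hom)
      then show ?thesis using assms by simp
    next
      case False
      then show ?thesis by (simp add: lookup_y) (metis (mono_tags) sum.neutral when_def)
    qed
  qed
  ultimately show ?thesis by simp
qed

theorem proposition11p4:
  fixes q :: "'k::field"
  assumes "q \<noteq> 0" and "q ^ 4 \<noteq> 1"
  shows "aw_comm_ideal_preimage q = {x :: 'k freealg. abel_hom x = 0}"
  using aw_comm_ideal_preimage_eq[of q] commutator_ideal_subset_ker_abel_hom
    ker_abel_hom_subset_commutator_ideal by blast

end
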